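(* Let $\Omega=e^{\frac{\sqrt{-1}}{2\pi}N\log\frac1z}A(z)$ on the punctured disc, with $N$ nilpotent, $N^{n+1}=0$, and $A(z)=A_0+A_1z+\cdots$ an $H$-valued power series with radius of convergence $\delta>0$. Expanding, write $\Omega=\sum_{k,l}A_{k,l}z^k(\log\frac1z)^l=\sum_{k,l}A_{k,l}f_{k,l}$ with $f_{k,l}=z^k(\log\frac1z)^l$ ($k\ge0$, $0\le l\le n$), and set $\deg f_{k,l}=k-\frac{l}{n+1}$. Then this series converges in the $C^\infty$ sense (near $0$). Moreover, for every real $\mu$ and integer $s\ge0$, \[\Big\|\Omega-\sum_{\deg f_{k,l}\le\mu}A_{k,l}f_{k,l}\Big\|_{C^s}\le C\,r^{k_0-s}\Big(\log\frac1r\Big)^{l_0},\qquad r=|z|,\] for $|z|$ sufficiently small, where $(k_0,l_0)$ is the unique pair of nonnegative integers with $l_0\le n$, $k_0-\frac{l_0}{n+1}>\mu$, and $k'-\frac{l'}{n+1}\ge k_0-\frac{l_0}{n+1}$ for all integers $k',l'$ with $k'-\frac{l'}{n+1}>\mu$; and $C$ is a constant depending only on $k_0,l_0,\mu$ and $\Omega$.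
   Context: This arises from a one-parameter family of polarized Calabi–Yau $n$-folds over the punctured disc $\Delta^*$ (coordinate $z$): by Schmid's nilpotent orbit theorem (after a base change) a nonzero holomorphic section $\Omega$ of the Hodge bundle $F^n$, valued in a fixed complex vector space $H$ (the primitive middle cohomology), has the stated form, $N$ being the nilpotent logarithm of the monodromy. $C^s$ norms are taken with respect to $z$ on a small punctured disc. *)

theory Defs
  imports "HOL-Analysis.Analysis"
begin

text \<open>The space H is modelled as complex^'d ('d a finite index type);
 linear operators on H as complex matrices complex^'d^'d.\<close>

definition mpow :: "complex^'d^'d \<Rightarrow> nat \<Rightarrow> complex^'d^'d" where
  "mpow M j = (((**) M) ^^ j) (mat 1)"

definition mexp :: "complex^'d^'d \<Rightarrow> complex^'d^'d" where
  "mexp M = (\<Sum>j. inverse (fact j) *\<^sub>R mpow M j)"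

definition Aser :: "(nat \<Rightarrow> complex^'d) \<Rightarrow> complex \<Rightarrow> complex^'d" where
  "Aser a z = (\<Sum>j. (z ^ j) *s a j)"

definition Omega :: "complex^'d^'d \<Rightarrow> (nat \<Rightarrow> complex^'d) \<Rightarrow> complex \<Rightarrow> complex^'d" where
  "Omega N a z = mexp (mat (\<i> / (2 * complex_of_real pi) * Ln (inverse z)) ** N) *v Aser a z"

definition fkl :: "nat \<Rightarrow> nat \<Rightarrow> complex \<Rightarrow> complex" where
  "fkl k l z = z ^ k * (Ln (inverse z)) ^ l"

text \<open>Coefficients A_{k,l} of the expansion Omega = sum A_{k,l} f_{k,l}:
  A_{k,l} = (i/(2pi))^l / l! * N^l A_k.\<close>
definition Akl :: "complex^'d^'d \<Rightarrow> (nat \<Rightarrow> complex^'d) \<Rightarrow> nat \<Rightarrow> nat \<Rightarrow> complex^'d" where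
  "Akl N a k l = ((\<i> / (2 * complex_of_real pi)) ^ l / of_nat (fact l)) *s (mpow N l *v a k)"

definition degf :: "nat \<Rightarrow> nat \<Rightarrow> nat \<Rightarrow> real" where
  "degf n k l = real k - real l / real (n + 1)"

definition vderiv :: "(complex \<Rightarrow> complex^'d) \<Rightarrow> complex \<Rightarrow> complex^'d" where
  "vderiv F z = (\<chi> i. deriv (\<lambda>w. F w $ i) z)"

text \<open>Pointwise C^s norm at z (for functions holomorphic near z):
  sum of norms of the complex derivatives of order 0..s.\<close>
definition Cs_norm :: "nat \<Rightarrow> (complex \<Rightarrow> complex^'d) \<Rightarrow> complex \<Rightarrow> real" where
  "Cs_norm s F z = (\<Sum>j\<le>s. norm ((vderiv ^^ j) F z))"

text \<open>Slit punctured disc of radius rho (domain of the principal branch).\<close>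
definition sdisc :: "real \<Rightarrow> complex set" where
  "sdisc \<rho> = {z. 0 < cmod z \<and> cmod z < \<rho> \<and> z \<notin> \<real>\<^sub>\<le>\<^sub>0}"

end

(*
  Since N is nilpotent, Omega(z) = \<Sum>_{l \<le> n} (log 1/z)^l h_l(z) with h_l(z) = \<Sum>_k A_{k,l} z^k
  holomorphic on a disc |z| < t. Any partial sum of the expansion that keeps the terms k < K_l of
  each h_l therefore leaves a remainder \<Sum>_l (log 1/z)^l g_l(z), where g_l is a tail of h_l and is
  bounded by (|w|/t)^K_l times a tail of the convergent majorant \<Sum>_k |A_{k,l}| t^k.

  To differentiate the remainder at z0 off the slit we use Cauchy's inequality on the disc of
  radius |z0|/4. That disc may cross the slit, but on it log(1/w) agrees near z0 with
  -(Log z0 + Log(w/z0)), which is holomorphic on the whole disc and bounded by log(1/|z0|) + 5.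
  Hence the j-th derivative is at most j! (4/|z0|)^j \<Sum>_l (log(1/|z0|) + 5)^l sup |g_l|.

  Letting K_l = m \<longrightarrow> \<infinity> gives uniform convergence of all derivatives on compact sets.
  Taking K_l = #{k. deg f_{k,l} \<le> \<mu>}, the minimality of (k0, l0) forces K_l = k0 with l \<le> l0,
  or K_l > k0; in both cases r^(K_l - j) (log(1/r) + 5)^l \<le> 2^n r^(k0 - s) (log 1/r)^l0 for small r.
*)
theory Submission
  imports Defs "HOL-Complex_Analysis.Complex_Analysis" "HOL-Real_Asymp.Real_Asymp"
begin

no_notation fps_nth (infixl \<open>$\<close> 75)

section \<open>Nilpotent matrix exponentials\<close>

lemma mpow_0 [simp]: "mpow M 0 = mat 1"
  by (simp add: mpow_def)

lemma mpow_Suc: "mpow M (Suc j) = M ** mpow M j"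
  by (simp add: mpow_def)

lemma mpow_eq_0_if_nilpotent:
  assumes "mpow N (n + 1) = 0" and "n < j"
  shows "mpow N j = 0"
proof -
  obtain d where "j = Suc (n + d)" using less_imp_Suc_add[OF \<open>n < j\<close>] by blast
  moreover have "mpow N (Suc (n + d)) = 0" for d
    by (induction d) (use assms(1) in \<open>simp_all add: mpow_Suc\<close>)
  ultimately show ?thesis by simp
qed

lemma matrix_vector_mul_mat: "mat c *v v = c *s v"
  for v :: "'a::comm_semiring_1^'n"
  by (simp add: vec_eq_iff matrix_vector_mult_def mat_def if_distrib if_distribR cong: if_cong)

lemma mpow_mat_mult: "mpow (mat c ** M) j = mat (c ^ j) ** mpow M j"
  unfolding matrix_eq
  by (induction j) (simp_all add: mpow_Suc matrix_vector_mul_mat vec.scale flip: matrix_vector_mul_assoc)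

lemma sum_matrix_vector_mult: "(\<Sum>l\<in>L. M l) *v v = (\<Sum>l\<in>L. M l *v v)"
  by (induction L rule: infinite_finite_induct) (simp_all add: matrix_vector_mult_add_rdistrib)

lemma scaleR_matrix_vector_mult: "(r *\<^sub>R A) *v v = r *\<^sub>R (A *v v)"
  for A :: "'a::real_algebra_1^'n^'m"
  by (simp add: vec_eq_iff matrix_vector_mult_def scaleR_sum_right)

lemma mexp_nilpotent_mult_vector:
  assumes "mpow N (n + 1) = 0"
  shows "mexp (mat c ** N) *v v = (\<Sum>l\<le>n. (c ^ l / fact l) *s (mpow N l *v v))"
proof -
  have mexp_eq: "mexp (mat c ** N) = (\<Sum>l\<le>n. inverse (fact l) *\<^sub>R mpow (mat c ** N) l)"
    unfolding mexp_def
    by (rule suminf_finite) (auto simp: mpow_eq_0_if_nilpotent[OF assms] mpow_mat_mult)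
  show ?thesis
    unfolding mexp_eq sum_matrix_vector_mult mpow_mat_mult
      scaleR_matrix_vector_mult matrix_vector_mul_assoc[symmetric] matrix_vector_mul_mat
    by (simp add: vec_eq_iff) (simp add: scaleR_conv_of_real divide_inverse mult_ac)
qed

section \<open>Componentwise derivatives\<close>

lemma vderiv_funpow_nth: "(vderiv ^^ j) F z $ i = (deriv ^^ j) (\<lambda>w. F w $ i) z"
proof (induction j arbitrary: z)
  case (Suc j)
  have "(\<lambda>w. (vderiv ^^ j) F w $ i) = (deriv ^^ j) (\<lambda>w. F w $ i)"
    using Suc.IH by auto
  then show ?case
    unfolding funpow.simps comp_def vderiv_def[of "(vderiv ^^ j) F"] by simp
qed simp

lemma vderiv_funpow_diff:
  assumes "\<And>i. (\<lambda>w. F w $ i) holomorphic_on S" and "\<And>i. (\<lambda>w. G w $ i) holomorphic_on S"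
    and "open S" and "z \<in> S"
  shows "(vderiv ^^ j) F z - (vderiv ^^ j) G z = (vderiv ^^ j) (\<lambda>w. F w - G w) z"
  by (simp add: vec_eq_iff vderiv_funpow_nth higher_deriv_diff[OF assms])

lemma norm_le_sum_norm_nth: "norm x \<le> (\<Sum>i\<in>UNIV. norm (x $ i))"
  by (simp add: norm_vec_def L2_set_le_sum)

lemma dist_vderiv_funpow_le:
  assumes "\<And>i. (\<lambda>w. F w $ i) holomorphic_on S" and "\<And>i. (\<lambda>w. G w $ i) holomorphic_on S"
    and "open S" and "z \<in> S"
  shows "dist ((vderiv ^^ j) G z) ((vderiv ^^ j) F z) \<le> (\<Sum>i\<in>UNIV. norm ((deriv ^^ j) (\<lambda>w. (F w - G w) $ i) z))"
proof -
  have "dist ((vderiv ^^ j) G z) ((vderiv ^^ j) F z) = norm ((vderiv ^^ j) (\<lambda>w. F w - G w) z)"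
    by (simp add: dist_norm norm_minus_commute flip: vderiv_funpow_diff[OF assms])
  also have "\<dots> \<le> (\<Sum>i\<in>UNIV. norm ((deriv ^^ j) (\<lambda>w. (F w - G w) $ i) z))"
    using norm_le_sum_norm_nth[of "(vderiv ^^ j) (\<lambda>w. F w - G w) z"] by (simp only: vderiv_funpow_nth)
  finally show ?thesis .
qed

lemma norm_vector_smult: "norm (c *s x) = norm c * norm x"
  for x :: "'a::real_normed_field^'n"
proof -
  have "norm (c *s x) = norm (norm c *\<^sub>R x)"
    by (rule antisym; rule norm_le_componentwise_cart) (simp_all add: norm_mult)
  then show ?thesis by simp
qed

lemma Cs_norm_le_sum_higher_deriv_nth:
  "Cs_norm s F z \<le> (\<Sum>j\<le>s. \<Sum>i\<in>UNIV. norm ((deriv ^^ j) (\<lambda>w. F w $ i) z))"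
  unfolding Cs_norm_def
proof (rule sum_mono)
  show "norm ((vderiv ^^ j) F z) \<le> (\<Sum>i\<in>UNIV. norm ((deriv ^^ j) (\<lambda>w. F w $ i) z))" for j
    using norm_le_sum_norm_nth[of "(vderiv ^^ j) F z"] by (simp only: vderiv_funpow_nth)
qed

section \<open>Tails of power series\<close>

definition coeffs_from :: "nat \<Rightarrow> (nat \<Rightarrow> 'a::zero) \<Rightarrow> nat \<Rightarrow> 'a" where
  "coeffs_from K f k = (if k < K then 0 else f k)"

lemma sums_coeffs_from:
  fixes f :: "nat \<Rightarrow> 'a::real_normed_vector"
  assumes "f sums s"
  shows "coeffs_from K f sums (s - (\<Sum>k<K. f k))"
proof -
  have "(\<lambda>k. f k - (if k \<in> {..<K} then f k else 0)) sums (s - (\<Sum>k<K. f k))"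
    by (intro sums_diff assms sums_If_finite_set) simp
  moreover have "(\<lambda>k. f k - (if k \<in> {..<K} then f k else 0)) = coeffs_from K f"
    by (auto simp: coeffs_from_def)
  ultimately show ?thesis by simp
qed

lemma coeffs_from_mult_power: "coeffs_from K b k * w ^ k = coeffs_from K (\<lambda>k. b k * w ^ k) k"
  for b :: "nat \<Rightarrow> 'a::semiring_1"
  by (simp add: coeffs_from_def)

lemma norm_coeffs_from: "norm (coeffs_from K b k) = coeffs_from K (\<lambda>k. norm (b k)) k"
  by (simp add: coeffs_from_def)

lemma summable_norm_powser_le:
  fixes b :: "nat \<Rightarrow> 'a::real_normed_field"
  assumes "summable (\<lambda>k. norm (b k) * t ^ k)" and "norm w \<le> t"
  shows "summable (\<lambda>k. norm (b k * w ^ k))"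
proof (rule summable_comparison_test[OF _ assms(1)])
  show "\<exists>N. \<forall>k\<ge>N. norm (norm (b k * w ^ k)) \<le> norm (b k) * t ^ k"
    using assms(2) by (auto simp: norm_mult norm_power intro!: mult_left_mono power_mono)
qed

lemma holomorphic_on_powser_ball:
  assumes "summable (\<lambda>k. norm (b k) * t ^ k)"
  shows "(\<lambda>w. \<Sum>k. b k * w ^ k) holomorphic_on ball 0 t"
proof -
  have "((\<lambda>w. \<Sum>k. b k * w ^ k) has_field_derivative (\<Sum>k. diffs b k * w ^ k)) (at w)"
    if "w \<in> ball 0 t" for w
  proof (rule termdiffs_strong)
    have "0 < t" using that le_less_trans[OF norm_ge_zero, of w t] by simp
    then show "summable (\<lambda>k. b k * complex_of_real t ^ k)"
      by (intro summable_norm_cancel[OF summable_norm_powser_le[OF assms]]) simp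
  qed (use that in auto)
  then show ?thesis by (subst holomorphic_on_open) blast+
qed

lemma summable_coeffs_from:
  assumes "summable (\<lambda>k. norm (b k) * t ^ k)" and "0 \<le> t"
  shows "summable (\<lambda>k. norm (coeffs_from K b k) * t ^ k)"
  by (rule summable_comparison_test[OF _ assms(1)])
     (use assms(2) in \<open>auto simp: coeffs_from_def\<close>)

lemma powser_coeffs_from:
  fixes b :: "nat \<Rightarrow> 'a::{real_normed_field,banach}"
  assumes "summable (\<lambda>k. norm (b k) * t ^ k)" and "norm w \<le> t"
  shows "(\<Sum>k. coeffs_from K b k * w ^ k) = (\<Sum>k. b k * w ^ k) - (\<Sum>k<K. b k * w ^ k)"
  unfolding coeffs_from_mult_power
  using sums_coeffs_from[OF summable_sums[OF summable_norm_cancel[OF summable_norm_powser_le[OF assms]]]]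
  by (simp add: sums_iff)

lemma norm_powser_coeffs_from_le:
  fixes b :: "nat \<Rightarrow> 'a::{real_normed_field,banach}"
  assumes sb: "summable (\<lambda>k. norm (b k) * t ^ k)" and w: "norm w \<le> t" and t: "0 < t"
  shows "norm (\<Sum>k. coeffs_from K b k * w ^ k) \<le> (norm w / t) ^ K * (\<Sum>k. norm (coeffs_from K b k) * t ^ k)"
proof -
  have sc: "summable (\<lambda>k. norm (coeffs_from K b k) * t ^ k)"
    using summable_coeffs_from[OF sb] t by simp
  have term_le: "norm (coeffs_from K b k * w ^ k) \<le> (norm w / t) ^ K * (norm (coeffs_from K b k) * t ^ k)" for k
  proof (cases "k < K")
    case False
    have "norm w ^ k = (norm w / t) ^ k * t ^ k" using t by (simp add: power_divide)
    also have "\<dots> \<le> (norm w / t) ^ K * t ^ k"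
      using False w t by (intro mult_right_mono power_decreasing) auto
    finally show ?thesis by (simp add: norm_mult norm_power mult_left_mono mult.left_commute)
  qed (simp add: coeffs_from_def)
  have sg: "summable (\<lambda>k. (norm w / t) ^ K * (norm (coeffs_from K b k) * t ^ k))"
    by (rule summable_mult[OF sc])
  have sn: "summable (\<lambda>k. norm (coeffs_from K b k * w ^ k))"
    by (rule summable_comparison_test'[OF sg]) (simp add: term_le)
  have "norm (\<Sum>k. coeffs_from K b k * w ^ k) \<le> (\<Sum>k. norm (coeffs_from K b k * w ^ k))"
    by (rule summable_norm[OF sn])
  also have "\<dots> \<le> (\<Sum>k. (norm w / t) ^ K * (norm (coeffs_from K b k) * t ^ k))"
    by (rule suminf_le[OF term_le sn sg])
  also have "\<dots> = (norm w / t) ^ K * (\<Sum>k. norm (coeffs_from K b k) * t ^ k)"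
    by (rule suminf_mult[OF sc])
  finally show ?thesis .
qed

lemma coeffs_from_majorant_tendsto_0:
  assumes "summable (\<lambda>k. norm (b k) * t ^ k)"
  shows "(\<lambda>K. \<Sum>k. norm (coeffs_from K b k) * t ^ k) \<longlonglongrightarrow> 0"
proof -
  let ?f = "\<lambda>k. norm (b k) * t ^ k"
  have "(\<Sum>k. norm (coeffs_from K b k) * t ^ k) = suminf ?f - (\<Sum>k<K. ?f k)" for K
    using sums_coeffs_from[OF summable_sums[OF assms], of K]
    by (simp add: sums_iff norm_coeffs_from coeffs_from_mult_power)
  moreover have "(\<lambda>K. suminf ?f - (\<Sum>k<K. ?f k)) \<longlonglongrightarrow> suminf ?f - suminf ?f"
    by (intro tendsto_intros summable_LIMSEQ assms)
  ultimately show ?thesis by simp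
qed

lemma coeffs_from_majorant_nonneg:
  assumes "summable (\<lambda>k. norm (b k) * t ^ k)" and "0 \<le> t"
  shows "0 \<le> (\<Sum>k. norm (coeffs_from K b k) * t ^ k)"
  using summable_coeffs_from[OF assms] assms(2) by (intro suminf_nonneg) auto

section \<open>Cauchy estimates for polynomials in the logarithm\<close>

lemma norm_le_in_cball_quarter:
  fixes z w :: complex
  assumes "w \<in> cball z (norm z / 4)"
  shows "norm w \<le> 5 / 4 * norm z"
  using assms norm_triangle_sub[of w z] by (simp add: dist_norm norm_minus_commute)

lemma Ln_inverse_eventually_eq_local_branch:
  assumes z0: "z0 \<notin> \<real>\<^sub>\<le>\<^sub>0"
  shows "eventually (\<lambda>w. Ln (inverse w) = - (Ln z0 + Ln (w / z0))) (nhds z0)"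
proof -
  have z0_ne: "z0 \<noteq> 0" using z0 by auto
  define e where "e = pi - \<bar>Im (Ln z0)\<bar>"
  have e: "0 < e" using Im_Ln_less_pi[OF z0] mpi_less_Im_Ln[of z0] z0_ne by (auto simp: e_def)
  have "((\<lambda>w. Ln (w / z0)) \<longlongrightarrow> Ln (z0 / z0)) (nhds z0)"
    using z0_ne by (intro tendsto_intros) (auto intro: filterlim_ident)
  then have "eventually (\<lambda>w. norm (Ln (w / z0)) < e) (nhds z0)"
    using e z0_ne by (auto dest: tendstoD simp: dist_norm)
  moreover have "eventually (\<lambda>w. w \<notin> \<real>\<^sub>\<le>\<^sub>0) (nhds z0)"
    using eventually_nhds_in_open[of "- \<real>\<^sub>\<le>\<^sub>0" z0] z0 by (auto simp: open_Compl)
  ultimately show ?thesis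
  proof eventually_elim
    case (elim w)
    have w_ne: "w \<noteq> 0" using elim(2) by auto
    have "\<bar>Im (Ln (w / z0))\<bar> < e" using elim(1) abs_Im_le_cmod[of "Ln (w / z0)"] by linarith
    then have "Ln (z0 * (w / z0)) = Ln z0 + Ln (w / z0)"
      using w_ne z0_ne by (intro Ln_times_simple) (auto simp: e_def)
    then show ?case using z0_ne Ln_inverse[OF elim(2)] by simp
  qed
qed

lemma norm_divide_sub_one_le_quarter:
  fixes z0 w :: complex
  assumes "z0 \<noteq> 0" and "w \<in> cball z0 (norm z0 / 4)"
  shows "norm (w / z0 - 1) \<le> 1 / 4"
proof -
  have "norm (w / z0 - 1) = norm (w - z0) / norm z0"
    using assms(1) by (simp add: norm_divide[symmetric] diff_divide_distrib)
  also have "\<dots> \<le> 1 / 4"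
    using assms by (simp add: divide_le_eq dist_norm norm_minus_commute)
  finally show ?thesis .
qed

lemma divide_notin_nonpos_Reals_near:
  fixes z0 w :: complex
  assumes "z0 \<noteq> 0" and "w \<in> cball z0 (norm z0 / 4)"
  shows "w / z0 \<notin> \<real>\<^sub>\<le>\<^sub>0"
proof -
  have "Re (1 - w / z0) \<le> 1 / 4"
    using norm_divide_sub_one_le_quarter[OF assms] abs_Re_le_cmod[of "1 - w / z0"]
    by (simp add: norm_minus_commute)
  then show ?thesis by (auto simp: complex_nonpos_Reals_iff)
qed

lemma norm_local_branch_le:
  assumes z0: "z0 \<notin> \<real>\<^sub>\<le>\<^sub>0" "norm z0 < 1" and w: "w \<in> cball z0 (norm z0 / 4)"
  shows "norm (Ln z0 + Ln (w / z0)) \<le> ln (1 / norm z0) + 5"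
proof -
  have z0_ne: "z0 \<noteq> 0" using z0 by auto
  have "norm (Ln z0) \<le> \<bar>Re (Ln z0)\<bar> + \<bar>Im (Ln z0)\<bar>" by (rule cmod_le)
  also have "\<bar>Re (Ln z0)\<bar> = ln (1 / norm z0)"
    using z0_ne z0(2) by (simp add: ln_div)
  also have "\<bar>Im (Ln z0)\<bar> \<le> pi" using Im_Ln_le_pi[of z0] mpi_less_Im_Ln[of z0] z0_ne by auto
  finally have "norm (Ln z0) \<le> ln (1 / norm z0) + pi" by simp
  moreover have "norm (Ln (1 + (w / z0 - 1))) \<le> 2 * norm (w / z0 - 1)"
    using norm_divide_sub_one_le_quarter[OF z0_ne w] by (intro norm_Ln_le) auto
  then have "norm (Ln (w / z0)) \<le> 1 / 2"
    using norm_divide_sub_one_le_quarter[OF z0_ne w] by simp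
  ultimately show ?thesis
    using norm_triangle_ineq[of "Ln z0" "Ln (w / z0)"] pi_less_4 by linarith
qed

lemma higher_deriv_log_polynomial_bound:
  fixes h :: "nat \<Rightarrow> complex \<Rightarrow> complex" and F :: "complex \<Rightarrow> complex"
  assumes z0: "z0 \<notin> \<real>\<^sub>\<le>\<^sub>0" "norm z0 < 1"
    and hol: "\<And>l. l \<le> n \<Longrightarrow> h l holomorphic_on cball z0 (norm z0 / 4)"
    and bound: "\<And>l w. l \<le> n \<Longrightarrow> w \<in> cball z0 (norm z0 / 4) \<Longrightarrow> norm (h l w) \<le> B l"
    and F: "eventually (\<lambda>w. F w = (\<Sum>l\<le>n. Ln (inverse w) ^ l * h l w)) (nhds z0)"
  shows "norm ((deriv ^^ j) F z0)
           \<le> fact j * (4 / norm z0) ^ j * (\<Sum>l\<le>n. (ln (1 / norm z0) + 5) ^ l * B l)"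
proof -
  define r where "r = norm z0 / 4"
  define G where "G w = (\<Sum>l\<le>n. (- (Ln z0 + Ln (w / z0))) ^ l * h l w)" for w
  have z0_ne: "z0 \<noteq> 0" and r: "0 < r" using z0 by (auto simp: r_def)
  have "eventually (\<lambda>w. F w = G w) (nhds z0)"
    using F Ln_inverse_eventually_eq_local_branch[OF z0(1)] by eventually_elim (simp add: G_def)
  then have "(deriv ^^ j) F z0 = (deriv ^^ j) G z0"
    by (rule higher_deriv_cong_ev) simp
  moreover have hol_G: "G holomorphic_on cball z0 r"
    unfolding G_def r_def using divide_notin_nonpos_Reals_near[OF z0_ne] z0_ne hol
    by (intro holomorphic_intros) auto
  have "norm (G w) \<le> (\<Sum>l\<le>n. (ln (1 / norm z0) + 5) ^ l * B l)" if "w \<in> cball z0 r" for w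
    unfolding G_def
  proof (rule order_trans[OF norm_sum sum_mono])
    fix l assume "l \<in> {..n}"
    have w: "w \<in> cball z0 (norm z0 / 4)" using that by (simp add: r_def)
    have "norm (- (Ln z0 + Ln (w / z0))) ^ l \<le> (ln (1 / norm z0) + 5) ^ l"
      unfolding norm_minus_cancel by (intro power_mono norm_local_branch_le[OF z0 w]) simp
    moreover have "norm (h l w) \<le> B l" using bound \<open>l \<in> {..n}\<close> w by simp
    ultimately show "norm ((- (Ln z0 + Ln (w / z0))) ^ l * h l w) \<le> (ln (1 / norm z0) + 5) ^ l * B l"
      using order_trans[OF norm_ge_zero norm_local_branch_le[OF z0 w]]
      unfolding norm_mult norm_power by (intro mult_mono) auto
  qed
  then have "norm ((deriv ^^ j) G z0) \<le> fact j * (\<Sum>l\<le>n. (ln (1 / norm z0) + 5) ^ l * B l) / r ^ j"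
    using hol_G r
    by (intro Cauchy_inequality holomorphic_on_imp_continuous_on holomorphic_on_subset[OF hol_G])
       (auto simp: dist_norm norm_minus_commute)
  ultimately show ?thesis by (simp add: r_def power_divide field_simps)
qed

section \<open>The logarithmic expansion of Omega\<close>

lemma matrix_vector_mult_Aser:
  assumes "summable (\<lambda>k. z ^ k *s a k)"
  shows "M *v Aser a z = Aser (\<lambda>k. M *v a k) z"
  unfolding Aser_def vec.scale[symmetric]
  by (rule bounded_linear.suminf[OF matrix_vector_mul_bounded_linear[of M] assms])

lemma Akl_eq_matrix_vector_mult:
  "Akl N a k l = (mat ((\<i> / (2 * complex_of_real pi)) ^ l / fact l) ** mpow N l) *v a k"
  by (simp add: Akl_def matrix_vector_mul_mat flip: matrix_vector_mul_assoc)

lemma Omega_eq_log_expansion: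
  assumes "mpow N (n + 1) = 0" and "summable (\<lambda>k. z ^ k *s a k)"
  shows "Omega N a z = (\<Sum>l\<le>n. Ln (inverse z) ^ l *s Aser (\<lambda>k. Akl N a k l) z)"
  by (simp add: Omega_def mexp_nilpotent_mult_vector[OF assms(1)] Akl_eq_matrix_vector_mult
      flip: matrix_vector_mult_Aser[OF assms(2)])
     (simp add: vec_eq_iff matrix_vector_mul_mat power_mult_distrib power_divide mult_ac flip: matrix_vector_mul_assoc)

lemma summable_Aser_terms:
  fixes a :: "nat \<Rightarrow> 'a::{real_normed_field,banach}^'n"
  assumes "summable (\<lambda>k. norm (a k) * t ^ k)" and "norm z \<le> t"
  shows "summable (\<lambda>k. z ^ k *s a k)"
proof (rule summable_norm_cancel, rule summable_comparison_test'[OF assms(1)])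
  show "norm (norm (z ^ k *s a k)) \<le> norm (a k) * t ^ k" for k
    using assms(2) by (simp add: norm_vector_smult norm_power)
                      (metis mult.commute mult_left_mono norm_ge_zero power_mono)
qed

lemma Aser_nth:
  assumes "summable (\<lambda>k. z ^ k *s b k)"
  shows "Aser b z $ i = (\<Sum>k. b k $ i * z ^ k)"
  using bounded_linear.suminf[OF bounded_linear_vec_nth assms, of i]
  by (simp add: Aser_def mult.commute)

lemma summable_norm_Akl:
  assumes "summable (\<lambda>k. norm (a k) * t ^ k)" and "0 \<le> t"
  shows "summable (\<lambda>k. norm (Akl N a k l) * t ^ k)"
proof -
  define M where "M = mat ((\<i> / (2 * complex_of_real pi)) ^ l / fact l) ** mpow N l"
  obtain C where C: "\<And>v. norm (M *v v) \<le> norm v * C"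
    using bounded_linear.bounded[OF matrix_vector_mul_bounded_linear[of M]] by blast
  have "norm (Akl N a k l) * t ^ k \<le> norm (a k) * t ^ k * C" for k
    using mult_right_mono[OF C[of "a k"], of "t ^ k"] assms(2)
    by (simp add: Akl_eq_matrix_vector_mult M_def mult_ac)
  then show ?thesis
    by (intro summable_comparison_test'[OF summable_mult2[OF assms(1)]]) (simp add: assms(2))
qed

lemma summable_norm_Akl_nth:
  assumes "summable (\<lambda>k. norm (a k) * t ^ k)" and "0 \<le> t"
  shows "summable (\<lambda>k. norm (Akl N a k l $ i) * t ^ k)"
  by (rule summable_comparison_test'[OF summable_norm_Akl[OF assms, of N l]])
     (simp add: assms(2) mult_right_mono Finite_Cartesian_Product.norm_nth_le)

lemma sdisc_eq: "sdisc \<rho> = ball 0 \<rho> - \<real>\<^sub>\<le>\<^sub>0"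
  by (auto simp: sdisc_def)

lemma sdisc_mono: "\<rho> \<le> \<rho>' \<Longrightarrow> sdisc \<rho> \<subseteq> sdisc \<rho>'"
  by (auto simp: sdisc_def)

lemma open_sdisc: "open (sdisc \<rho>)"
  unfolding sdisc_eq by (intro open_Diff) auto

definition expansion_partial_sum ::
    "complex^'d^'d \<Rightarrow> (nat \<Rightarrow> complex^'d) \<Rightarrow> nat \<Rightarrow> (nat \<Rightarrow> nat) \<Rightarrow> complex \<Rightarrow> complex^'d" where
  "expansion_partial_sum N a n K u = (\<Sum>l\<le>n. \<Sum>k<K l. fkl k l u *s Akl N a k l)"

lemma Omega_minus_partial_sum_nth:
  assumes nil: "mpow N (n + 1) = 0" and sa: "summable (\<lambda>k. norm (a k) * t ^ k)" and z: "norm z \<le> t"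
  shows "(Omega N a z - expansion_partial_sum N a n K z) $ i
           = (\<Sum>l\<le>n. Ln (inverse z) ^ l * (\<Sum>k. coeffs_from (K l) (\<lambda>k. Akl N a k l $ i) k * z ^ k))"
proof -
  have t: "0 \<le> t" using z norm_ge_zero order_trans by blast
  have sA: "summable (\<lambda>k. z ^ k *s Akl N a k l)" for l
    by (rule summable_Aser_terms[OF summable_norm_Akl[OF sa t] z])
  show ?thesis
    using powser_coeffs_from[OF summable_norm_Akl_nth[OF sa t] z]
    by (simp add: Omega_eq_log_expansion[OF nil summable_Aser_terms[OF sa z]] Aser_nth[OF sA]
        expansion_partial_sum_def fkl_def sum_subtractf right_diff_distrib sum_distrib_left mult_ac)
qed

lemma holomorphic_on_partial_sum_nth:
  "(\<lambda>w. expansion_partial_sum N a n K w $ i) holomorphic_on - \<real>\<^sub>\<le>\<^sub>0"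
  unfolding expansion_partial_sum_def fkl_def
  by (simp, intro holomorphic_intros) auto

lemma holomorphic_on_Omega_minus_partial_sum_nth:
  assumes nil: "mpow N (n + 1) = 0" and sa: "summable (\<lambda>k. norm (a k) * t ^ k)" and t: "0 \<le> t"
  shows "(\<lambda>w. (Omega N a w - expansion_partial_sum N a n K w) $ i)
           holomorphic_on ball 0 t - \<real>\<^sub>\<le>\<^sub>0"
proof (rule holomorphic_transform)
  have hol: "(\<lambda>w. \<Sum>k. coeffs_from (K l) (\<lambda>k. Akl N a k l $ i) k * w ^ k) holomorphic_on ball 0 t" for l
    by (rule holomorphic_on_powser_ball[OF summable_coeffs_from[OF summable_norm_Akl_nth[OF sa t] t]])
  then show "(\<lambda>w. \<Sum>l\<le>n. Ln (inverse w) ^ l * (\<Sum>k. coeffs_from (K l) (\<lambda>k. Akl N a k l $ i) k * w ^ k))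
          holomorphic_on ball 0 t - \<real>\<^sub>\<le>\<^sub>0"
    by (intro holomorphic_intros holomorphic_on_subset[OF hol]) auto
qed (rule Omega_minus_partial_sum_nth[OF nil sa, symmetric]; simp)

lemma holomorphic_on_Omega_nth:
  assumes "mpow N (n + 1) = 0" and "summable (\<lambda>k. norm (a k) * t ^ k)" and "0 \<le> t"
  shows "(\<lambda>w. Omega N a w $ i) holomorphic_on sdisc t"
  using holomorphic_on_Omega_minus_partial_sum_nth[OF assms, of "\<lambda>_. 0"]
  by (simp add: sdisc_eq expansion_partial_sum_def)

lemma higher_deriv_Omega_minus_partial_sum_nth_le:
  assumes nil: "mpow N (n + 1) = 0" and sa: "summable (\<lambda>k. norm (a k) * t ^ k)"
    and t: "0 < t" "t \<le> 1" and z: "z \<in> sdisc (t / 2)"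
  shows "norm ((deriv ^^ j) (\<lambda>w. (Omega N a w - expansion_partial_sum N a n K w) $ i) z)
    \<le> fact j * (4 / norm z) ^ j * (\<Sum>l\<le>n. (ln (1 / norm z) + 5) ^ l *
         ((5 * norm z / (4 * t)) ^ K l * (\<Sum>k. norm (coeffs_from (K l) (\<lambda>k. Akl N a k l $ i) k) * t ^ k)))"
proof (rule higher_deriv_log_polynomial_bound)
  let ?h = "\<lambda>l w. \<Sum>k. coeffs_from (K l) (\<lambda>k. Akl N a k l $ i) k * w ^ k"
  have sb: "summable (\<lambda>k. norm (Akl N a k l $ i) * t ^ k)" for l
    using summable_norm_Akl_nth[OF sa] t by simp
  have z_small: "z \<notin> \<real>\<^sub>\<le>\<^sub>0" "norm z < t / 2" using z by (auto simp: sdisc_def)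
  then show "z \<notin> \<real>\<^sub>\<le>\<^sub>0" "norm z < 1" using t by auto
  have cball_sub: "cball z (norm z / 4) \<subseteq> ball 0 t"
    using norm_le_in_cball_quarter z_small(2) t by force
  show "?h l holomorphic_on cball z (norm z / 4)" for l
    using holomorphic_on_powser_ball[OF summable_coeffs_from[OF sb]] t cball_sub
    by (auto intro: holomorphic_on_subset)
  show "norm (?h l w) \<le> (5 * norm z / (4 * t)) ^ K l * (\<Sum>k. norm (coeffs_from (K l) (\<lambda>k. Akl N a k l $ i) k) * t ^ k)"
    if "w \<in> cball z (norm z / 4)" for l w
  proof -
    have w: "norm w \<le> t" using that cball_sub by auto
    have "norm (?h l w) \<le> (norm w / t) ^ K l * (\<Sum>k. norm (coeffs_from (K l) (\<lambda>k. Akl N a k l $ i) k) * t ^ k)"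
      by (rule norm_powser_coeffs_from_le[OF sb w t(1)])
    also have "\<dots> \<le> (5 * norm z / (4 * t)) ^ K l * (\<Sum>k. norm (coeffs_from (K l) (\<lambda>k. Akl N a k l $ i) k) * t ^ k)"
      using norm_le_in_cball_quarter[OF that] t summable_coeffs_from[OF sb]
      by (intro mult_right_mono power_mono suminf_nonneg) (auto simp: field_simps)
    finally show ?thesis .
  qed
  have "eventually (\<lambda>w. w \<in> ball 0 t) (nhds z)"
    using z_small t by (intro eventually_nhds_in_open) auto
  then show "eventually (\<lambda>w. (Omega N a w - expansion_partial_sum N a n K w) $ i
      = (\<Sum>l\<le>n. Ln (inverse w) ^ l * ?h l w)) (nhds z)"
    by eventually_elim (rule Omega_minus_partial_sum_nth[OF nil sa]; simp)
qed

section \<open>Convergence of the expansion\<close>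

lemma partial_sums_eq_expansion_partial_sum:
  "(\<lambda>u. \<Sum>k<m. \<Sum>l\<le>n. fkl k l u *s Akl N a k l) = expansion_partial_sum N a n (\<lambda>_. m)"
  unfolding expansion_partial_sum_def by (rule ext, rule sum.swap)

lemma higher_deriv_Omega_minus_partial_sum_nth_le_uniform:
  assumes nil: "mpow N (n + 1) = 0" and sa: "summable (\<lambda>k. norm (a k) * t ^ k)"
    and t: "0 < t" "t \<le> 1" and z: "z \<in> sdisc (t / 2)" and \<delta>: "0 < \<delta>" "\<delta> \<le> norm z"
  shows "norm ((deriv ^^ j) (\<lambda>w. (Omega N a w - expansion_partial_sum N a n K w) $ i) z)
    \<le> fact j * (4 / \<delta>) ^ j *
         (\<Sum>l\<le>n. (ln (1 / \<delta>) + 5) ^ l * (\<Sum>k. norm (coeffs_from (K l) (\<lambda>k. Akl N a k l $ i) k) * t ^ k))"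
proof -
  define T where "T l = (\<Sum>k. norm (coeffs_from (K l) (\<lambda>k. Akl N a k l $ i) k) * t ^ k)" for l
  have T_nonneg: "0 \<le> T l" for l
    unfolding T_def using t by (intro coeffs_from_majorant_nonneg summable_norm_Akl_nth[OF sa]) auto
  have z_small: "norm z < t / 2" using z by (simp add: sdisc_def)
  have L: "0 \<le> ln (1 / norm z)" "ln (1 / norm z) \<le> ln (1 / \<delta>)"
    using z_small t \<delta> by (auto simp: ln_div)
  have "norm ((deriv ^^ j) (\<lambda>w. (Omega N a w - expansion_partial_sum N a n K w) $ i) z)
      \<le> fact j * (4 / norm z) ^ j * (\<Sum>l\<le>n. (ln (1 / norm z) + 5) ^ l * ((5 * norm z / (4 * t)) ^ K l * T l))"
    unfolding T_def by (rule higher_deriv_Omega_minus_partial_sum_nth_le[OF nil sa t z])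
  also have "\<dots> \<le> fact j * (4 / \<delta>) ^ j * (\<Sum>l\<le>n. (ln (1 / \<delta>) + 5) ^ l * T l)"
  proof (intro mult_left_mono mult_mono sum_mono power_mono)
    show "ln (1 / norm z) + 5 \<le> ln (1 / \<delta>) + 5" using L by simp
    show "4 / norm z \<le> 4 / \<delta>"
      using \<delta> by (auto intro!: divide_left_mono mult_pos_pos)
    show "(5 * norm z / (4 * t)) ^ K l * T l \<le> T l" for l
      using z_small t T_nonneg[of l]
      by (intro mult_left_le_one_le power_le_one) (auto simp: field_simps)
  qed (use \<delta> t T_nonneg L in \<open>auto intro!: sum_nonneg mult_nonneg_nonneg\<close>)
  finally show ?thesis unfolding T_def .
qed

lemma dist_higher_deriv_partial_sum_le:
  assumes nil: "mpow N (n + 1) = 0" and sa: "summable (\<lambda>k. norm (a k) * t ^ k)"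
    and t: "0 < t" "t \<le> 1" and z: "z \<in> sdisc (t / 2)" and \<delta>: "0 < \<delta>" "\<delta> \<le> norm z"
  shows "dist ((vderiv ^^ s) (expansion_partial_sum N a n K) z) ((vderiv ^^ s) (Omega N a) z)
    \<le> (\<Sum>i\<in>UNIV. fact s * (4 / \<delta>) ^ s *
         (\<Sum>l\<le>n. (ln (1 / \<delta>) + 5) ^ l * (\<Sum>k. norm (coeffs_from (K l) (\<lambda>k. Akl N a k l $ i) k) * t ^ k)))"
proof -
  have zs: "z \<in> sdisc t" using sdisc_mono[of "t / 2" t] z t by auto
  have "sdisc t \<subseteq> - \<real>\<^sub>\<le>\<^sub>0" by (auto simp: sdisc_def)
  then have hol_P: "(\<lambda>w. expansion_partial_sum N a n K w $ i) holomorphic_on sdisc t" for i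
    by (rule holomorphic_on_subset[OF holomorphic_on_partial_sum_nth])
  have "dist ((vderiv ^^ s) (expansion_partial_sum N a n K) z) ((vderiv ^^ s) (Omega N a) z)
      \<le> (\<Sum>i\<in>UNIV. norm ((deriv ^^ s) (\<lambda>w. (Omega N a w - expansion_partial_sum N a n K w) $ i) z))"
    by (rule dist_vderiv_funpow_le[OF holomorphic_on_Omega_nth[OF nil sa less_imp_le[OF t(1)]] hol_P
          open_sdisc zs])
  also have "\<dots> \<le> (\<Sum>i\<in>UNIV. fact s * (4 / \<delta>) ^ s *
      (\<Sum>l\<le>n. (ln (1 / \<delta>) + 5) ^ l * (\<Sum>k. norm (coeffs_from (K l) (\<lambda>k. Akl N a k l $ i) k) * t ^ k)))"
    by (intro sum_mono higher_deriv_Omega_minus_partial_sum_nth_le_uniform[OF nil sa t z \<delta>])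
  finally show ?thesis .
qed

lemma uniform_limit_higher_deriv_partial_sums:
  assumes nil: "mpow N (n + 1) = 0" and sa: "summable (\<lambda>k. norm (a k) * t ^ k)"
    and t: "0 < t" "t \<le> 1" and K: "compact K" "K \<subseteq> sdisc (t / 2)"
  shows "uniform_limit K (\<lambda>m w. (vderiv ^^ s) (\<lambda>u. \<Sum>k<m. \<Sum>l\<le>n. fkl k l u *s Akl N a k l) w)
           ((vderiv ^^ s) (Omega N a)) sequentially"
proof (cases "K = {}")
  case False
  obtain z0 where z0: "z0 \<in> K" and min: "\<And>z. z \<in> K \<Longrightarrow> norm z0 \<le> norm z"
    using continuous_attains_inf[OF K(1) False continuous_on_norm_id] by blast
  have \<delta>: "0 < norm z0" using z0 K(2) by (auto simp: sdisc_def)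
  define E where "E m = (\<Sum>i\<in>UNIV. fact s * (4 / norm z0) ^ s * (\<Sum>l\<le>n. (ln (1 / norm z0) + 5) ^ l *
      (\<Sum>k. norm (coeffs_from m (\<lambda>k. Akl N a k l $ i) k) * t ^ k)))" for m
  have "E \<longlonglongrightarrow> (\<Sum>i\<in>UNIV. fact s * (4 / norm z0) ^ s * (\<Sum>l\<le>n. (ln (1 / norm z0) + 5) ^ l * 0))"
    unfolding E_def
    using t by (auto intro!: tendsto_eq_intros coeffs_from_majorant_tendsto_0 summable_norm_Akl_nth[OF sa])
  then have E: "E \<longlonglongrightarrow> 0" by simp
  have bound: "dist ((vderiv ^^ s) (expansion_partial_sum N a n (\<lambda>_. m)) z) ((vderiv ^^ s) (Omega N a) z) \<le> E m"
    if "z \<in> K" for m z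
    unfolding E_def using that K(2) by (intro dist_higher_deriv_partial_sum_le[OF nil sa t _ \<delta> min]) auto
  show ?thesis
    unfolding partial_sums_eq_expansion_partial_sum
  proof (rule uniform_limitI)
    fix e :: real assume "0 < e"
    with E have "eventually (\<lambda>m. E m < e) sequentially" by (rule order_tendstoD)
    then show "\<forall>\<^sub>F m in sequentially. \<forall>z\<in>K.
        dist ((vderiv ^^ s) (expansion_partial_sum N a n (\<lambda>_. m)) z) ((vderiv ^^ s) (Omega N a) z) < e"
      by eventually_elim (use bound in \<open>auto intro: le_less_trans\<close>)
  qed
qed simp

section \<open>Truncation by degree\<close>

definition degf_cutoff :: "nat \<Rightarrow> real \<Rightarrow> nat \<Rightarrow> nat" where
  "degf_cutoff n \<mu> l = nat (\<lfloor>\<mu> + real l / real (n + 1)\<rfloor> + 1)"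

lemma degf_le_iff_less_cutoff: "degf n k l \<le> \<mu> \<longleftrightarrow> k < degf_cutoff n \<mu> l"
proof -
  have "degf n k l \<le> \<mu> \<longleftrightarrow> real k \<le> \<mu> + real l / real (n + 1)"
    by (auto simp: degf_def)
  also have "\<dots> \<longleftrightarrow> int k \<le> \<lfloor>\<mu> + real l / real (n + 1)\<rfloor>"
    by (simp add: le_floor_iff)
  finally show ?thesis by (simp add: degf_cutoff_def zless_nat_eq_int_zless)
qed

lemma sum_degf_le:
  "(\<Sum>(k, l)\<in>{(k, l). l \<le> n \<and> degf n k l \<le> \<mu>}. g k l) = (\<Sum>l\<le>n. \<Sum>k<degf_cutoff n \<mu> l. g k l)"
proof -
  have "{(k, l). l \<le> n \<and> degf n k l \<le> \<mu>} = (\<lambda>(l, k). (k, l)) ` (SIGMA l:{..n}. {..<degf_cutoff n \<mu> l})"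
    by (auto simp: degf_le_iff_less_cutoff image_iff)
  moreover have "inj_on (\<lambda>(l, k). (k, l)) (SIGMA l:{..n}. {..<degf_cutoff n \<mu> l})"
    by (auto simp: inj_on_def)
  ultimately show ?thesis
    by (simp add: sum.reindex sum.Sigma split_def)
qed

lemma degf_cutoff_cases:
  assumes l: "l \<le> n" and l0: "l0 \<le> n"
    and min: "\<forall>k' l'. l' \<le> n \<and> degf n k' l' > \<mu> \<longrightarrow> degf n k' l' \<ge> degf n k0 l0"
  shows "(degf_cutoff n \<mu> l = k0 \<and> l \<le> l0) \<or> k0 < degf_cutoff n \<mu> l"
proof -
  define K where "K = degf_cutoff n \<mu> l"
  have "degf n K l > \<mu>" using degf_le_iff_less_cutoff[of n K l \<mu>] by (simp add: K_def)
  then have "degf n k0 l0 \<le> degf n K l" using min l by blast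
  then have "(real k0 - real l0 / real (n + 1)) * real (n + 1) \<le> (real K - real l / real (n + 1)) * real (n + 1)"
    by (intro mult_right_mono) (auto simp: degf_def)
  then have "real (k0 * (n + 1) + l) \<le> real (K * (n + 1) + l0)"
    unfolding of_nat_add of_nat_mult by (simp add: left_diff_distrib)
  then have le: "k0 * (n + 1) + l \<le> K * (n + 1) + l0" by (simp only: of_nat_le_iff)
  have "\<not> K < k0"
  proof
    assume "K < k0"
    then have "(K + 1) * (n + 1) \<le> k0 * (n + 1)" by (intro mult_le_mono1) simp
    then show False using le l0 by simp
  qed
  then show ?thesis using le unfolding K_def[symmetric] by (cases "K = k0") auto
qed

lemma eventually_small_radius:
  "eventually (\<lambda>r::real. r < 1 \<and> 5 \<le> ln (1 / r) \<and> r * (2 * ln (1 / r)) ^ n \<le> 1) (at_right 0)"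
proof -
  have "eventually (\<lambda>r::real. r < 1) (at_right 0)"
    and "eventually (\<lambda>r::real. 5 \<le> ln (1 / r)) (at_right 0)"
    and "eventually (\<lambda>r::real. r * (2 * ln (1 / r)) ^ n \<le> 1) (at_right 0)"
    by real_asymp+
  then show ?thesis by eventually_elim auto
qed

lemma powr_log_power_le:
  fixes r :: real
  assumes r: "0 < r" "r < 1" "5 \<le> ln (1 / r)" "r * (2 * ln (1 / r)) ^ n \<le> 1"
    and j: "j \<le> s" and l: "l \<le> n" and l0: "l0 \<le> n"
    and K: "(K = k0 \<and> l \<le> l0) \<or> k0 < K"
  shows "r powr (real K - real j) * (ln (1 / r) + 5) ^ l \<le> 2 ^ n * r powr (real k0 - real s) * ln (1 / r) ^ l0"
proof -
  define L where "L = ln (1 / r)"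
  have L1: "1 \<le> L" using r by (simp add: L_def)
  have "(L + 5) ^ l \<le> (2 * L) ^ l" using r by (intro power_mono) (auto simp: L_def)
  then have L5: "(L + 5) ^ l \<le> 2 ^ l * L ^ l" by (simp add: power_mult_distrib)
  have "r powr (real K - real j) * (L + 5) ^ l \<le> r powr (real k0 - real s) * (2 ^ n * L ^ l0)"
  proof (cases "K = k0 \<and> l \<le> l0")
    case True
    have "r powr (real K - real j) \<le> r powr (real k0 - real s)"
      using True j r by (intro powr_mono') auto
    moreover have "2 ^ l * L ^ l \<le> 2 ^ n * L ^ l0" using True l L1 by (intro mult_mono power_increasing) auto
    ultimately show ?thesis using L5 L1 by (intro mult_mono) auto
  next
    case False
    with K have "r powr (real K - real j) \<le> r powr (real k0 - real s + 1)"
      using j r by (intro powr_mono') auto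
    also have "\<dots> = r powr (real k0 - real s) * r" using r by (simp add: powr_add)
    finally have "r powr (real K - real j) \<le> r powr (real k0 - real s) * r" .
    moreover have "(L + 5) ^ l \<le> (2 * L) ^ n"
      using L5 power_increasing[OF l, of "2 * L"] L1 by (simp add: power_mult_distrib)
    ultimately have "r powr (real K - real j) * (L + 5) ^ l \<le> r powr (real k0 - real s) * (r * (2 * L) ^ n)"
      unfolding mult.assoc[symmetric] using r(1) L1 by (intro mult_mono) auto
    also have "\<dots> \<le> r powr (real k0 - real s) * (2 ^ n * L ^ l0)"
    proof (rule mult_left_mono)
      have "r * (2 * L) ^ n \<le> 1" using r by (simp add: L_def)
      also have "1 \<le> (2::real) ^ n * L ^ l0"
        using mult_mono[of 1 "(2::real) ^ n" 1 "L ^ l0"] L1 by (simp add: one_le_power)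
      finally show "r * (2 * L) ^ n \<le> 2 ^ n * L ^ l0" .
    qed simp
    finally show ?thesis .
  qed
  then show ?thesis by (simp add: L_def mult_ac)
qed

lemma Cauchy_term_le_powr_log:
  fixes r t T :: real
  assumes r: "0 < r" "r < 1" "5 \<le> ln (1 / r)" "r * (2 * ln (1 / r)) ^ n \<le> 1" and t: "0 < t" "0 \<le> T"
    and j: "j \<le> s" and l: "l \<le> n" and l0: "l0 \<le> n" and K: "(K = k0 \<and> l \<le> l0) \<or> k0 < K"
  shows "(4 / r) ^ j * ((ln (1 / r) + 5) ^ l * ((5 * r / (4 * t)) ^ K * T))
           \<le> (4 ^ j * 2 ^ n * (5 / (4 * t)) ^ K * T) * (r powr (real k0 - real s) * ln (1 / r) ^ l0)"
proof -
  have "r powr (real K - real j) = r ^ K / r ^ j"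
    using r(1) by (simp add: powr_diff powr_realpow)
  then have "(4 / r) ^ j * ((ln (1 / r) + 5) ^ l * ((5 * r / (4 * t)) ^ K * T))
      = (4 ^ j * (5 / (4 * t)) ^ K * T) * (r powr (real K - real j) * (ln (1 / r) + 5) ^ l)"
    by (simp add: power_divide power_mult_distrib mult_ac)
  also have "\<dots> \<le> (4 ^ j * (5 / (4 * t)) ^ K * T) * (2 ^ n * r powr (real k0 - real s) * ln (1 / r) ^ l0)"
    using t by (intro mult_left_mono powr_log_power_le[OF r j l l0 K]) auto
  finally show ?thesis by (simp add: mult_ac)
qed

lemma Cs_norm_Omega_minus_partial_sum_le:
  assumes nil: "mpow N (n + 1) = 0" and sa: "summable (\<lambda>k. norm (a k) * t ^ k)"
    and t: "0 < t" "t \<le> 1" and z: "z \<in> sdisc (t / 2)"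
  shows "Cs_norm s (\<lambda>u. Omega N a u - expansion_partial_sum N a n K u) z
    \<le> (\<Sum>j\<le>s. \<Sum>i\<in>UNIV. fact j * (4 / norm z) ^ j * (\<Sum>l\<le>n. (ln (1 / norm z) + 5) ^ l *
         ((5 * norm z / (4 * t)) ^ K l * (\<Sum>k. norm (coeffs_from (K l) (\<lambda>k. Akl N a k l $ i) k) * t ^ k))))"
  by (rule order_trans[OF Cs_norm_le_sum_higher_deriv_nth sum_mono[OF sum_mono]])
     (rule higher_deriv_Omega_minus_partial_sum_nth_le[OF nil sa t z])

lemma Omega_remainder_Cs_norm_bound:
  assumes nil: "mpow N (n + 1) = 0" and sa: "summable (\<lambda>k. norm (a k) * t ^ k)"
    and t: "0 < t" "t \<le> 1" and l0: "l0 \<le> n"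
    and min: "\<forall>k' l'. l' \<le> n \<and> degf n k' l' > \<mu> \<longrightarrow> degf n k' l' \<ge> degf n k0 l0"
  shows "\<exists>C \<rho>. \<rho> > 0 \<and> (\<forall>z\<in>sdisc \<rho>.
           Cs_norm s (\<lambda>u. Omega N a u - (\<Sum>(k, l)\<in>{(k, l). l \<le> n \<and> degf n k l \<le> \<mu>}. fkl k l u *s Akl N a k l)) z
             \<le> C * cmod z powr (real k0 - real s) * (ln (1 / cmod z)) ^ l0)"
proof -
  define K where "K = degf_cutoff n \<mu>"
  define T where "T i l = (\<Sum>k. norm (coeffs_from (K l) (\<lambda>k. Akl N a k l $ i) k) * t ^ k)" for i l
  define C where "C = (\<Sum>j\<le>s. \<Sum>i\<in>UNIV. fact j * (\<Sum>l\<le>n. 4 ^ j * 2 ^ n * (5 / (4 * t)) ^ K l * T i l))"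
  obtain \<rho>1 :: real where \<rho>1: "0 < \<rho>1"
    "\<forall>r>0. r < \<rho>1 \<longrightarrow> r < 1 \<and> 5 \<le> ln (1 / r) \<and> r * (2 * ln (1 / r)) ^ n \<le> 1"
    using eventually_small_radius[of n] unfolding eventually_at_right_field by blast
  have T_nonneg: "0 \<le> T i l" for i l
    unfolding T_def using t by (intro coeffs_from_majorant_nonneg summable_norm_Akl_nth[OF sa]) auto
  have "Cs_norm s (\<lambda>u. Omega N a u - expansion_partial_sum N a n K u) z
      \<le> C * (norm z powr (real k0 - real s) * ln (1 / norm z) ^ l0)"
    if z: "z \<in> sdisc (min (t / 2) \<rho>1)" for z
  proof -
    define r where "r = norm z"
    define L where "L = ln (1 / r)"
    have zt: "z \<in> sdisc (t / 2)" using z sdisc_mono[OF min.cobounded1] by blast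
    have r: "0 < r" "r < 1" "5 \<le> ln (1 / r)" "r * (2 * ln (1 / r)) ^ n \<le> 1"
      using z \<rho>1(2) by (auto simp: sdisc_def r_def)
    have "Cs_norm s (\<lambda>u. Omega N a u - expansion_partial_sum N a n K u) z
        \<le> (\<Sum>j\<le>s. \<Sum>i\<in>UNIV. fact j * ((4 / r) ^ j * (\<Sum>l\<le>n. (L + 5) ^ l * ((5 * r / (4 * t)) ^ K l * T i l))))"
      using Cs_norm_Omega_minus_partial_sum_le[OF nil sa t zt] by (simp add: r_def L_def T_def mult.assoc)
    also have "\<dots> \<le> (\<Sum>j\<le>s. \<Sum>i\<in>UNIV. fact j * (\<Sum>l\<le>n. (4 ^ j * 2 ^ n * (5 / (4 * t)) ^ K l * T i l)
        * (r powr (real k0 - real s) * L ^ l0)))"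
      unfolding sum_distrib_left L_def K_def
      using r t(1) l0 T_nonneg degf_cutoff_cases[OF _ l0 min]
      by (intro sum_mono mult_left_mono Cauchy_term_le_powr_log[OF r]) auto
    also have "\<dots> = C * (r powr (real k0 - real s) * L ^ l0)"
      by (simp add: C_def sum_distrib_right mult.assoc)
    finally show ?thesis by (simp add: r_def L_def)
  qed
  moreover have "0 < min (t / 2) \<rho>1" using \<rho>1(1) t(1) by simp
  ultimately show ?thesis
    unfolding sum_degf_le K_def expansion_partial_sum_def mult.assoc by blast
qed

lemma conv_radius_pos_imp_summable_majorant:
  assumes "conv_radius a > 0"
  shows "\<exists>t>0. t \<le> 1 \<and> summable (\<lambda>k. norm (a k) * t ^ k)"
proof -
  obtain t' :: ereal where t': "0 < t'" "t' < min 1 (conv_radius a)"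
    using assms dense[of 0 "min 1 (conv_radius a)"] by auto
  define t where "t = real_of_ereal t'"
  have tt: "ereal t = t'" using t' by (cases t') (auto simp: t_def)
  have "0 < t" "t \<le> 1" using t' tt by auto
  moreover have "summable (\<lambda>k. norm (a k) * t ^ k)"
    by (rule summable_in_conv_radius) (use t' tt \<open>0 < t\<close> in auto)
  ultimately show ?thesis by blast
qed

theorem lemma7p2:
  fixes N :: "complex^'d^'d" and a :: "nat \<Rightarrow> complex^'d" and n :: nat
  assumes nil: "mpow N (n + 1) = 0"
    and rad: "conv_radius a > 0"
  shows "(\<exists>\<rho>>0. \<forall>s K. compact K \<and> K \<subseteq> sdisc \<rho> \<longrightarrow>
            uniform_limit K
              (\<lambda>m w. (vderiv ^^ s) (\<lambda>u. \<Sum>k<m. \<Sum>l\<le>n. fkl k l u *s Akl N a k l) w)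
              ((vderiv ^^ s) (Omega N a)) sequentially)
       \<and> (\<forall>(\<mu>::real) (s::nat) (k0::nat) (l0::nat).
            l0 \<le> n \<and> degf n k0 l0 > \<mu>
            \<and> (\<forall>k' l'. l' \<le> n \<and> degf n k' l' > \<mu> \<longrightarrow> degf n k' l' \<ge> degf n k0 l0)
            \<longrightarrow> (\<exists>C \<rho>. \<rho> > 0 \<and> (\<forall>z\<in>sdisc \<rho>.
                  Cs_norm s (\<lambda>u. Omega N a u
                     - (\<Sum>(k, l)\<in>{(k, l). l \<le> n \<and> degf n k l \<le> \<mu>}. fkl k l u *s Akl N a k l)) z
                  \<le> C * cmod z powr (real k0 - real s) * (ln (1 / cmod z)) ^ l0)))"
proof -
  obtain t where t: "0 < t" "t \<le> 1" and sa: "summable (\<lambda>k. norm (a k) * t ^ k)"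
    using conv_radius_pos_imp_summable_majorant[OF rad] by blast
  show ?thesis
    using t uniform_limit_higher_deriv_partial_sums[OF nil sa t] Omega_remainder_Cs_norm_bound[OF nil sa t]
    by (intro conjI exI[of _ "t / 2"]) auto
qed

end
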